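(* In the setting described in the context, with $\phi_1(0),\phi_2(0)>0$, one has $y_1'(x)>0$ for all $x\in(0,1)$. Moreover, if $\phi_1(0)<1$, $\phi_1(0)\phi_2(0)<1$ and $1<\phi_1(0)+\phi_1(0)\phi_2(0)$, then $y_2'$, $y_3'$ and $y_2'+y_3'$ have no zeroes on $(0,1)$; that is, $K$, $\phi_1$, $\phi_2$ and $\phi_1\phi_2$ are monotonic on $(0,1)$.
   Context: Setting: $(M^4,g)$ is a Hadamard manifold (complete, simply connected, non-positive sectional curvature) which is conformally compact Einstein ($\mathrm{Ric}_g=-3g$, and $x^2g$ extends continuously to $\overline M$ for a boundary defining function $x$) with conformal infinity $(\mathbb{S}^3,[\hat g])$, $\hat g=\lambda_1\sigma_1^2+\lambda_2\sigma_2^2+\lambda_3\sigma_3^2$, where $\sigma_i$ are the standard left-invariant $1$-forms on $\mathrm{SU}(2)\cong\mathbb{S}^3$ and $\lambda_1,\lambda_2,\lambda_3>0$ are pairwise distinct. The conformal Killing fields of $\hat g$ extend to Killing fields of $g$ having a common fixed point $p_0\in M$ (the center of gravity); with $r$ the distance to $p_0$, $x=e^{-r}$ is a geodesic defining function, and along a geodesic ray $\theta=\theta_0$ from $p_0$, in polar coordinates $(x,\theta^1,\theta^2,\theta^3)$ with $d\theta^i=\sigma_i$ at $\theta_0$, one has $g=x^{-2}\big(dx^2+\tfrac{(1-x^2)^2}{4}\bar h\big)$ with $\bar h=I_1(d\theta^1)^2+I_2(d\theta^2)^2+I_3(d\theta^3)^2$, where $I_i\in C^\infty([0,1])$ are positive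 with $I_i(1)=1$. Set $K=I_1I_2I_3$, $\phi_1=I_2/I_1$, $\phi_2=I_3/I_2$, $y_1=\log K$, $y_2=\log\phi_1$, $y_3=\log\phi_2$. Then $K(0)<1$ and $(y_1,y_2,y_3)$ satisfy on $[0,1]$: $y_1''-x^{-1}(1+3x^2)(1-x^2)^{-1}y_1'+\frac16(y_1')^2+\frac13[(y_2')^2+y_2'y_3'+(y_3')^2]=0$; $y_1''-x^{-1}(5+7x^2)(1-x^2)^{-1}y_1'+\frac12(y_1')^2+16(1-x^2)^{-2}(3-\Upsilon)=0$ with $\Upsilon=K^{-1/3}[2(\phi_1^2\phi_2)^{1/3}+2(\phi_1^{-1}\phi_2)^{1/3}+2(\phi_1\phi_2^2)^{-1/3}-\phi_1^{-4/3}\phi_2^{-2/3}-\phi_1^{2/3}\phi_2^{-2/3}-\phi_1^{2/3}\phi_2^{4/3}]$; $y_2''-2x^{-1}(1+2x^2)(1-x^2)^{-1}y_2'+\frac12y_1'y_2'+32(1-x^2)^{-2}K^{-1/3}[\phi_1^{2/3}\phi_2^{1/3}-\phi_1^{-1/3}\phi_2^{1/3}-\phi_1^{2/3}\phi_2^{-2/3}+\phi_1^{-4/3}\phi_2^{-2/3}]=0$; $y_3''-2x^{-1}(1+2x^2)(1-x^2)^{-1}y_3'+\frac12y_1'y_3'+32(1-x^2)^{-2}K^{-1/3}[\phi_1^{-1/3}\phi_2^{1/3}-\phi_1^{-1/3}\phi_2^{-2/3}-\phi_1^{2/3}\phi_2^{4/3}+\phi_1^{2/3}\phi_2^{-2/3}]=0$;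 with boundary conditions $\phi_1(0)=\lambda_2/\lambda_1$, $\phi_2(0)=\lambda_3/\lambda_2$, $K(1)=\phi_1(1)=\phi_2(1)=1$, $y_i'(0)=y_i'(1)=0$ for $i=1,2,3$. *)

theory Defs
  imports "HOL-Analysis.Analysis"
begin

definition smooth_on :: "real set \<Rightarrow> (real \<Rightarrow> real) \<Rightarrow> bool" where
  "smooth_on S f \<longleftrightarrow> (\<exists>D :: nat \<Rightarrow> real \<Rightarrow> real. D 0 = f \<and>
     (\<forall>n. \<forall>x\<in>S. (D n has_real_derivative D (Suc n) x) (at x within S)))"

definition Upsilon :: "real \<Rightarrow> real \<Rightarrow> real \<Rightarrow> real" where
  "Upsilon K p1 p2 = K powr (-1/3) *
     (2 * (p1^2 * p2) powr (1/3) + 2 * (p2 / p1) powr (1/3) + 2 * (p1 * p2^2) powr (-1/3)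
      - p1 powr (-4/3) * p2 powr (-2/3) - p1 powr (2/3) * p2 powr (-2/3)
      - p1 powr (2/3) * p2 powr (4/3))"

definition F2 :: "real \<Rightarrow> real \<Rightarrow> real \<Rightarrow> real" where
  "F2 K p1 p2 = K powr (-1/3) *
     (p1 powr (2/3) * p2 powr (1/3) - p1 powr (-1/3) * p2 powr (1/3)
      - p1 powr (2/3) * p2 powr (-2/3) + p1 powr (-4/3) * p2 powr (-2/3))"

definition F3 :: "real \<Rightarrow> real \<Rightarrow> real \<Rightarrow> real" where
  "F3 K p1 p2 = K powr (-1/3) *
     (p1 powr (-1/3) * p2 powr (1/3) - p1 powr (-1/3) * p2 powr (-2/3)
      - p1 powr (2/3) * p2 powr (4/3) + p1 powr (2/3) * p2 powr (-2/3))"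

end

theory Submission
  imports Defs
begin

text \<open>Write \<open>y1 = ln K\<close>, \<open>y2 = ln \<phi>1\<close>, \<open>y3 = ln \<phi>2\<close>. With the weight \<open>(1 - x^2)^2 / x\<close> the
  equation for \<open>y1\<close> says that the weighted \<open>y1'\<close> is nonincreasing; it vanishes at \<open>x = 1\<close>,
  so \<open>y1' \<ge> 0\<close>. A zero of \<open>y1'\<close> propagates to an interval ending at 1, where then also
  \<open>y2' = y3' = 0\<close>; backward uniqueness for the second order equations spreads this to all
  of \<open>(0, 1)\<close>, contradicting \<open>K 0 < 1\<close>.

  The equations for \<open>u = y2, y3, y2 + y3\<close> share the principal part \<open>aniso_op\<close>, which has
  the integrating factor \<open>(1 - x^2)^3 / x^2 * exp (y1 / 2)\<close>, and their remaining term is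
  \<open>s * P * (1 - exp u)\<close> with \<open>s > 0\<close>. A maximum principle gives \<open>y2 \<le> 0\<close> and
  \<open>y2 + y3 \<le> 0\<close>, which makes \<open>P \<ge> 0\<close> for \<open>y2\<close> and \<open>y2 + y3\<close>, and the weighted argument
  yields \<open>y2' > 0\<close> and \<open>y2' + y3' > 0\<close>. Hence \<open>\<phi>1 + \<phi>1 * \<phi>2 > 1\<close> throughout, so \<open>P > 0\<close>
  in the equation for \<open>y3\<close>: then \<open>y3\<close> keeps the sign of \<open>y3 0\<close> and \<open>y3'\<close> has the opposite
  sign.\<close>

lemma gronwall_energy_ineq:
  fixes p q r L :: real
  assumes "L \<ge> 0" "\<bar>r\<bar> \<le> L * (\<bar>p\<bar> + \<bar>q\<bar>)"
  shows "0 \<le> 2*p*q + 2*q*r + (1 + 3*L) * (p^2 + q^2)"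
proof -
  have am_gm: "2 * \<bar>p\<bar> * \<bar>q\<bar> \<le> p^2 + q^2"
    using sum_squares_ge_zero[of "\<bar>p\<bar> - \<bar>q\<bar>" 0] by (simp add: power2_eq_square algebra_simps)
  have "- (2*q*r) \<le> 2 * \<bar>q\<bar> * \<bar>r\<bar>"
    using abs_ge_minus_self[of "q*r"] unfolding abs_mult by linarith
  also have "\<dots> \<le> 2 * \<bar>q\<bar> * (L * (\<bar>p\<bar> + \<bar>q\<bar>))"
    using assms(2) by (intro mult_left_mono) auto
  also have "\<dots> = L * (2 * \<bar>p\<bar> * \<bar>q\<bar>) + 2 * L * q^2"
    by (simp add: algebra_simps power2_eq_square)
  also have "\<dots> \<le> L * (p^2 + q^2) + 2 * L * (p^2 + q^2)"
    using assms(1) am_gm by (intro add_mono mult_left_mono) auto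
  finally have "- (2*q*r) \<le> 3 * L * (p^2 + q^2)" by simp
  moreover have "- (2*p*q) \<le> p^2 + q^2"
    using am_gm abs_ge_minus_self[of "p*q"] unfolding abs_mult by linarith
  ultimately show ?thesis by (simp add: algebra_simps)
qed

lemma second_order_backward_uniqueness:
  fixes u u' u'' :: "real \<Rightarrow> real"
  assumes du: "\<And>x. x \<in> {c..d} \<Longrightarrow> (u has_real_derivative u' x) (at x within {c..d})"
    and du': "\<And>x. x \<in> {c..d} \<Longrightarrow> (u' has_real_derivative u'' x) (at x within {c..d})"
    and "L \<ge> 0" and bound: "\<And>x. x \<in> {c..d} \<Longrightarrow> \<bar>u'' x\<bar> \<le> L * (\<bar>u x\<bar> + \<bar>u' x\<bar>)"
    and "u d = 0" "u' d = 0" and x: "x \<in> {c..d}"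
  shows "u x = 0 \<and> u' x = 0"
proof -
  define M where "M = 1 + 3*L"
  define h where "h t = ((u t)^2 + (u' t)^2) * exp (M*t)" for t
  have dh: "(h has_real_derivative
      (2*u t*u' t + 2*u' t*u'' t + M * ((u t)^2 + (u' t)^2)) * exp (M*t)) (at t within {c..d})"
    if "t \<in> {c..d}" for t
    unfolding h_def using du[OF that] du'[OF that]
    by (auto intro!: derivative_eq_intros simp: algebra_simps)
  have "h x \<le> h d"
  proof (rule DERIV_nonneg_imp_increasing_open[of x d h])
    have "continuous_on {c..d} h" by (rule DERIV_continuous_on[OF dh])
    then show "continuous_on {x..d} h" by (rule continuous_on_subset) (use x in auto)
    fix t assume "x < t" "t < d"
    then have t: "t \<in> {c..d}" "c < t" using x by auto
    show "\<exists>y. (h has_real_derivative y) (at t) \<and> 0 \<le> y"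
      using dh[OF t(1)] gronwall_energy_ineq[OF \<open>L \<ge> 0\<close> bound[OF t(1)]] t \<open>t < d\<close>
      by (auto simp: at_within_Icc_at M_def)
  qed (use x in auto)
  then have "(u x)^2 + (u' x)^2 \<le> 0"
    using \<open>u d = 0\<close> \<open>u' d = 0\<close> by (simp add: h_def mult_le_0_iff)
  then show ?thesis by (simp add: sum_power2_le_zero_iff)
qed

lemma abs_one_minus_exp_le: "\<bar>1 - exp y\<bar> \<le> exp \<bar>y\<bar> * \<bar>y :: real\<bar>"
proof (cases "y \<ge> 0")
  case True
  have "exp y * (1 - y) \<le> exp y * exp (-y)"
    using exp_ge_add_one_self[of "-y"] by (intro mult_left_mono) auto
  then show ?thesis using True by (simp add: exp_minus algebra_simps)
next
  case False
  have "\<bar>1 - exp y\<bar> = 1 - exp y" using False by simp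
  also have "\<dots> \<le> -y" using exp_ge_add_one_self[of y] by linarith
  also have "\<dots> \<le> exp (-y) * (-y)" using mult_right_mono[of 1 "exp (-y)" "-y"] False by simp
  finally show ?thesis using False by simp
qed

text \<open>The nonlinearity \<open>1 - exp u\<close> is locally Lipschitz with value 0 at 0, so the
  energy estimate applies on every compact subinterval.\<close>
lemma exp_ode_backward_uniqueness:
  fixes u u' u'' \<alpha> \<beta> :: "real \<Rightarrow> real"
  assumes du: "\<And>x. x \<in> {a..b} \<Longrightarrow> (u has_real_derivative u' x) (at x within {a..b})"
    and du': "\<And>x. x \<in> {a..b} \<Longrightarrow> (u' has_real_derivative u'' x) (at x within {a..b})"
    and "continuous_on {a<..b} \<alpha>" "continuous_on {a<..b} \<beta>"
    and ode: "\<And>x. x \<in> {a<..b} \<Longrightarrow> u'' x = \<alpha> x * u' x + \<beta> x * (1 - exp (u x))"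
    and "u b = 0" "u' b = 0" and t: "t \<in> {a<..b}"
  shows "u t = 0 \<and> u' t = 0"
proof -
  have sub: "{t..b} \<subseteq> {a<..b}" "{t..b} \<subseteq> {a..b}" using t by auto
  have "continuous_on {a..b} u" by (rule DERIV_continuous_on[OF du])
  then obtain U where U: "\<And>x. x \<in> {t..b} \<Longrightarrow> \<bar>u x\<bar> \<le> U"
    using continuous_on_compact_bound[OF compact_Icc continuous_on_subset[OF _ sub(2)]]
    by (metis real_norm_def)
  obtain A where A: "A \<ge> 0" "\<And>x. x \<in> {t..b} \<Longrightarrow> \<bar>\<alpha> x\<bar> \<le> A"
    using continuous_on_compact_bound[OF compact_Icc continuous_on_subset[OF assms(3) sub(1)]]
    by (metis real_norm_def)
  obtain B where B: "B \<ge> 0" "\<And>x. x \<in> {t..b} \<Longrightarrow> \<bar>\<beta> x\<bar> \<le> B"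
    using continuous_on_compact_bound[OF compact_Icc continuous_on_subset[OF assms(4) sub(1)]]
    by (metis real_norm_def)
  have bound: "\<bar>u'' x\<bar> \<le> (A + B * exp U) * (\<bar>u x\<bar> + \<bar>u' x\<bar>)" if x: "x \<in> {t..b}" for x
  proof -
    have "exp \<bar>u x\<bar> * \<bar>u x\<bar> \<le> exp U * \<bar>u x\<bar>"
      using U[OF x] by (intro mult_right_mono) auto
    then have lip: "\<bar>1 - exp (u x)\<bar> \<le> exp U * \<bar>u x\<bar>"
      using abs_one_minus_exp_le[of "u x"] by linarith
    have "\<bar>u'' x\<bar> \<le> \<bar>\<alpha> x\<bar> * \<bar>u' x\<bar> + \<bar>\<beta> x\<bar> * \<bar>1 - exp (u x)\<bar>"
      using ode[of x] sub x by (metis abs_mult abs_triangle_ineq subsetD)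
    also have "\<dots> \<le> A * \<bar>u' x\<bar> + B * (exp U * \<bar>u x\<bar>)"
      using A B x lip by (intro add_mono mult_mono) auto
    also have "\<dots> \<le> (A + B * exp U) * (\<bar>u x\<bar> + \<bar>u' x\<bar>)"
      using A(1) B(1) by (simp add: algebra_simps)
    finally show ?thesis .
  qed
  show ?thesis
  proof (rule second_order_backward_uniqueness[of t b u u' u'' "A + B * exp U"])
    fix x assume "x \<in> {t..b}"
    then have "x \<in> {a..b}" using sub(2) by auto
    then show "(u has_real_derivative u' x) (at x within {t..b})"
      "(u' has_real_derivative u'' x) (at x within {t..b})"
      using DERIV_subset[OF du sub(2)] DERIV_subset[OF du' sub(2)] by auto
  qed (use A B bound assms(6,7) t in auto)
qed

lemma deriv_vanishing_imp_eq_endpoint: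
  fixes u u' :: "real \<Rightarrow> real"
  assumes du: "\<And>x. x \<in> {a..b} \<Longrightarrow> (u has_real_derivative u' x) (at x within {a..b})"
    and x: "x \<in> {a..b}" and zero: "\<And>t. t \<in> {x<..<b} \<Longrightarrow> u' t = 0"
  shows "u x = u b"
proof (cases "x = b")
  case False
  have "continuous_on {a..b} u" by (rule DERIV_continuous_on[OF du])
  then have "continuous_on {x..b} u" by (rule continuous_on_subset) (use x in auto)
  moreover have "(u has_real_derivative 0) (at t)" if "x < t" "t < b" for t
    using du[of t] zero[of t] x that by (simp add: at_within_Icc_at)
  ultimately show ?thesis
    using DERIV_isconst_end[of x b u] x False by force
qed simp

lemma exp_ode_vanishing_tail:
  fixes u u' u'' \<alpha> \<beta> :: "real \<Rightarrow> real"
  assumes du: "\<And>x. x \<in> {a..b} \<Longrightarrow> (u has_real_derivative u' x) (at x within {a..b})"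
    and du': "\<And>x. x \<in> {a..b} \<Longrightarrow> (u' has_real_derivative u'' x) (at x within {a..b})"
    and "continuous_on {a<..<b} \<alpha>" "continuous_on {a<..<b} \<beta>"
    and ode: "\<And>x. x \<in> {a<..<b} \<Longrightarrow> u'' x = \<alpha> x * u' x + \<beta> x * (1 - exp (u x))"
    and "u b = 0" and x0: "x0 \<in> {a<..<b}" and tail: "\<And>t. t \<in> {x0..<b} \<Longrightarrow> u' t = 0"
    and t: "t \<in> {a<..<b}"
  shows "u' t = 0"
proof (cases "t < x0")
  case True
  have sub: "{a..x0} \<subseteq> {a..b}" "{a<..x0} \<subseteq> {a<..<b}" using x0 by auto
  have "u x0 = 0"
    using deriv_vanishing_imp_eq_endpoint[OF du, of x0] tail x0 \<open>u b = 0\<close> by auto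
  moreover have "u' x0 = 0" using tail x0 by auto
  moreover have "(u has_real_derivative u' x) (at x within {a..x0})"
    "(u' has_real_derivative u'' x) (at x within {a..x0})" if "x \<in> {a..x0}" for x
    using du[of x] du'[of x] that sub(1) by (auto intro: DERIV_subset)
  ultimately have "u t = 0 \<and> u' t = 0"
    using exp_ode_backward_uniqueness[of a x0 u u' u'' \<alpha> \<beta> t]
      continuous_on_subset[OF assms(3) sub(2)] continuous_on_subset[OF assms(4) sub(2)]
      ode sub t True by (simp add: subset_iff)
  then show "u' t = 0" ..
qed (use tail t in auto)

lemma interior_max_second_deriv:
  fixes u u' u'' :: "real \<Rightarrow> real"
  assumes du: "\<And>x. x \<in> {a..b} \<Longrightarrow> (u has_real_derivative u' x) (at x within {a..b})"
    and du': "\<And>x. x \<in> {a..b} \<Longrightarrow> (u' has_real_derivative u'' x) (at x within {a..b})"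
    and x: "x \<in> {a..b}" "u x > u a" "u x > u b"
  obtains x1 where "x1 \<in> {a<..<b}" "u' x1 = 0" "u'' x1 \<le> 0" "\<And>t. t \<in> {a..b} \<Longrightarrow> u t \<le> u x1"
proof -
  have cu: "continuous_on {a..b} u" by (rule DERIV_continuous_on[OF du])
  obtain x1 where x1: "x1 \<in> {a..b}" "\<And>t. t \<in> {a..b} \<Longrightarrow> u t \<le> u x1"
    using continuous_attains_sup[OF compact_Icc _ cu] x(1) by fastforce
  have "x1 \<noteq> a" "x1 \<noteq> b" using x x1(2)[of x] by auto
  with x1(1) have x1o: "a < x1" "x1 < b" by auto
  have D: "(u has_real_derivative u' y) (at y)" "(u' has_real_derivative u'' y) (at y)"
    if "a < y" "y < b" for y
    using du[of y] du'[of y] that by (simp_all add: at_within_Icc_at)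
  have u'x1: "u' x1 = 0"
  proof (rule DERIV_local_max[OF D(1)[OF x1o]])
    show "0 < min (x1 - a) (b - x1)" using x1o by simp
    show "\<forall>y. \<bar>x1 - y\<bar> < min (x1 - a) (b - x1) \<longrightarrow> u y \<le> u x1"
      using x1(2) by (auto simp: abs_if split: if_splits)
  qed
  have "u'' x1 \<le> 0"
  proof (rule ccontr)
    assume "\<not> u'' x1 \<le> 0"
    then obtain d where d: "d > 0" "\<And>h. 0 < h \<Longrightarrow> h < d \<Longrightarrow> u' x1 < u' (x1 + h)"
      using DERIV_pos_inc_right[OF D(2)[OF x1o]] by auto
    define y where "y = x1 + min (d/2) ((b - x1)/2)"
    have y: "x1 < y" "y < b" "y < x1 + d" using d x1o by (auto simp: y_def min_def field_simps)
    have "u x1 < u y"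
    proof (rule DERIV_pos_imp_increasing_open[OF y(1)])
      show "continuous_on {x1..y} u" by (rule continuous_on_subset[OF cu]) (use x1o y in auto)
      fix t assume "x1 < t" "t < y"
      then show "\<exists>z. (u has_real_derivative z) (at t) \<and> 0 < z"
        using D(1)[of t] d(2)[of "t - x1"] u'x1 x1o y by auto
    qed
    then show False using x1(2)[of y] x1o y by auto
  qed
  with x1o u'x1 x1(2) show ?thesis using that by auto
qed

lemma weighted_deriv_nonpos_imp_nonneg:
  fixes w v D :: "real \<Rightarrow> real"
  assumes w_pos: "\<And>x. x \<in> {a<..<b} \<Longrightarrow> w x > 0"
    and cont: "continuous_on {a<..b} (\<lambda>x. w x * v x)"
    and deriv: "\<And>x. x \<in> {a<..<b} \<Longrightarrow> ((\<lambda>x. w x * v x) has_real_derivative D x) (at x)"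
    and D_nonpos: "\<And>x. x \<in> {a<..<b} \<Longrightarrow> D x \<le> 0"
    and "v b = 0"
  shows "\<forall>x\<in>{a<..<b}. v x \<ge> 0"
    and "\<forall>x\<in>{a<..<b}. v x = 0 \<longrightarrow> (\<forall>t\<in>{x..<b}. v t = 0)"
proof -
  have antimono: "w t * v t \<le> w s * v s" if "s \<in> {a<..b}" "t \<in> {a<..b}" "s \<le> t" for s t
  proof (rule DERIV_nonpos_imp_decreasing_open[OF \<open>s \<le> t\<close>])
    show "continuous_on {s..t} (\<lambda>x. w x * v x)"
      by (rule continuous_on_subset[OF cont]) (use that in auto)
    fix x assume "s < x" "x < t"
    then show "\<exists>y. ((\<lambda>x. w x * v x) has_real_derivative y) (at x) \<and> y \<le> 0"
      using deriv[of x] D_nonpos[of x] that by auto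
  qed
  have nonneg: "w x * v x \<ge> 0" if "x \<in> {a<..b}" for x
    using antimono[OF that, of b] that \<open>v b = 0\<close> by auto
  show "\<forall>x\<in>{a<..<b}. v x \<ge> 0"
  proof
    fix x assume "x \<in> {a<..<b}"
    then show "v x \<ge> 0" using nonneg[of x] w_pos[of x] by (simp add: zero_le_mult_iff)
  qed
  show "\<forall>x\<in>{a<..<b}. v x = 0 \<longrightarrow> (\<forall>t\<in>{x..<b}. v t = 0)"
  proof (intro ballI impI)
    fix x t assume x: "x \<in> {a<..<b}" "v x = 0" and t: "t \<in> {x..<b}"
    then have "w t * v t = 0"
      using antimono[of x t] nonneg[of t] by force
    then show "v t = 0" using w_pos[of t] x t by auto
  qed
qed

lemma deriv_nonneg_imp_ge_left_endpoint:
  fixes u u' :: "real \<Rightarrow> real"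
  assumes du: "\<And>x. x \<in> {a..b} \<Longrightarrow> (u has_real_derivative u' x) (at x within {a..b})"
    and nonneg: "\<And>t. t \<in> {a<..<b} \<Longrightarrow> u' t \<ge> 0" and x: "x \<in> {a..b}"
  shows "u a \<le> u x"
proof (rule DERIV_nonneg_imp_increasing_open[of a x u])
  show "continuous_on {a..x} u"
    using DERIV_continuous_on[OF du] by (rule continuous_on_subset) (use x in auto)
  fix t assume "a < t" "t < x"
  then show "\<exists>y. (u has_real_derivative y) (at t) \<and> 0 \<le> y"
    using du[of t] nonneg[of t] x by (auto simp: at_within_Icc_at)
qed (use x in auto)

lemma exp_strict_mono_on_if_deriv:
  fixes f f' g :: "real \<Rightarrow> real"
  assumes g: "\<And>x. x \<in> {a<..<b} \<Longrightarrow> g x = exp (f x)"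
    and df: "\<And>x. x \<in> {a<..<b} \<Longrightarrow> (f has_real_derivative f' x) (at x)"
  shows "(\<And>x. x \<in> {a<..<b} \<Longrightarrow> f' x > 0) \<Longrightarrow> strict_mono_on {a<..<b} g"
    and "(\<And>x. x \<in> {a<..<b} \<Longrightarrow> f' x < 0) \<Longrightarrow> strict_antimono_on {a<..<b} g"
proof -
  have cont: "continuous_on {s..t} f" if "s \<in> {a<..<b}" "t \<in> {a<..<b}" for s t
    using df that by (intro DERIV_continuous_on[of _ _ f']) (auto intro: has_field_derivative_at_within)
  show "strict_mono_on {a<..<b} g" if "\<And>x. x \<in> {a<..<b} \<Longrightarrow> f' x > 0"
  proof (rule monotone_onI)
    fix s t assume st: "s \<in> {a<..<b}" "t \<in> {a<..<b}" "s < t"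
    have "f s < f t"
    proof (rule DERIV_pos_imp_increasing_open[OF st(3) _ cont[OF st(1,2)]])
      fix x assume "s < x" "x < t"
      then have "x \<in> {a<..<b}" using st by auto
      then show "\<exists>y. (f has_real_derivative y) (at x) \<and> 0 < y" using df that by blast
    qed
    then show "g s < g t" using g st by simp
  qed
  show "strict_antimono_on {a<..<b} g" if "\<And>x. x \<in> {a<..<b} \<Longrightarrow> f' x < 0"
  proof (rule monotone_onI)
    fix s t assume st: "s \<in> {a<..<b}" "t \<in> {a<..<b}" "s < t"
    have "f s > f t"
    proof (rule DERIV_neg_imp_decreasing_open[OF st(3) _ cont[OF st(1,2)]])
      fix x assume "s < x" "x < t"
      then have "x \<in> {a<..<b}" using st by auto
      then show "\<exists>y. (f has_real_derivative y) (at x) \<and> y < 0" using df that by blast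
    qed
    then show "g t < g s" using g st by simp
  qed
qed

lemma mult_one_minus_exp_nonpos_iff: "c * (1 - exp y) \<le> 0 \<longleftrightarrow> 0 \<le> c * (y::real)"
  by (cases c "0::real" rule: linorder_cases) (auto simp: mult_le_0_iff zero_le_mult_iff)

lemma one_plus_exp_le_exp_imp: "1 + exp a \<le> exp b \<Longrightarrow> a < b \<and> 0 < (b::real)"
proof -
  assume "1 + exp a \<le> exp b"
  then have "exp a < exp b" "1 < exp b" using exp_gt_zero[of a] by linarith+
  then show "a < b \<and> 0 < b" by simp
qed

lemma quadratic_form_nonneg: "0 \<le> (a::real)^2 + a*b + b^2"
  and quadratic_form_eq_0_iff: "(a::real)^2 + a*b + b^2 = 0 \<longleftrightarrow> a = 0 \<and> b = 0"
proof -
  have sq: "a^2 + a*b + b^2 = ((2*a + b)^2 + 3 * b^2) / 4"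
    by (simp add: power2_eq_square field_simps)
  show "0 \<le> a^2 + a*b + b^2" unfolding sq by simp
  show "a^2 + a*b + b^2 = 0 \<longleftrightarrow> a = 0 \<and> b = 0" unfolding sq by (auto simp: add_nonneg_eq_0_iff)
qed

lemma F2_factor:
  assumes "p > 0" "q > 0"
  shows "F2 K p q = K powr (-1/3) * p powr (-4/3) * q powr (-2/3) * ((1 - p) * (1 + p - p*q))"
proof -
  have "p powr (2/3) = p powr (-4/3) * p^2" "p powr (-1/3) = p powr (-4/3) * p"
    "q powr (1/3) = q powr (-2/3) * q"
    using powr_add[of p "-4/3" 2] powr_add[of p "-4/3" 1] powr_add[of q "-2/3" 1] assms
    by simp_all
  then show ?thesis
    unfolding F2_def by (simp add: algebra_simps power2_eq_square)
qed

lemma F3_factor: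
  assumes "p > 0" "q > 0"
  shows "F3 K p q = K powr (-1/3) * p powr (-4/3) * q powr (-2/3) * p * ((1 - q) * (p + p*q - 1))"
proof -
  have "p powr (2/3) = p powr (-4/3) * p^2" "p powr (-1/3) = p powr (-4/3) * p"
    "q powr (1/3) = q powr (-2/3) * q" "q powr (4/3) = q powr (-2/3) * q^2"
    using powr_add[of p "-4/3" 2] powr_add[of p "-4/3" 1] powr_add[of q "-2/3" 1]
      powr_add[of q "-2/3" 2] assms
    by simp_all
  then show ?thesis
    unfolding F3_def by (simp add: algebra_simps power2_eq_square)
qed

lemma exp_powr_prefactor:
  "exp a powr (-1/3) * exp b powr (-4/3) * exp c powr (-2/3) = exp (- (a + 4*b + 2*c) / 3 :: real)"
  by (simp add: exp_powr_real flip: exp_add)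

lemma F2_exp:
  "F2 (exp a) (exp b) (exp c) =
     exp (- (a + 4*b + 2*c) / 3) * ((1 - exp b) * (1 + exp b - exp (b + c)))"
  unfolding F2_factor[OF exp_gt_zero exp_gt_zero] exp_powr_prefactor by (simp add: exp_add)

lemma F3_exp:
  "F3 (exp a) (exp b) (exp c) =
     exp (- (a + 4*b + 2*c) / 3) * exp b * ((1 - exp c) * (exp b + exp (b + c) - 1))"
  unfolding F3_factor[OF exp_gt_zero exp_gt_zero] exp_powr_prefactor by (simp add: exp_add)

definition aniso_op :: "(real \<Rightarrow> real) \<Rightarrow> (real \<Rightarrow> real) \<Rightarrow> (real \<Rightarrow> real) \<Rightarrow> real \<Rightarrow> real" where
  "aniso_op y1' v' v'' x = v'' x - 2 * (1 + 2*x^2) / (x * (1 - x^2)) * v' x + 1/2 * y1' x * v' x"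

lemma one_minus_sq_pos: "x \<in> {0<..<1} \<Longrightarrow> 0 < 1 - (x::real)^2"
  by (simp add: power_less_one_iff abs_square_less_1)

lemma aniso_op_scale:
  "aniso_op y1' (\<lambda>x. c * v' x) (\<lambda>x. c * v'' x) x = c * aniso_op y1' v' v'' x"
  unfolding aniso_op_def by (simp add: algebra_simps)

lemma aniso_op_add:
  "aniso_op y1' (\<lambda>x. v' x + w' x) (\<lambda>x. v'' x + w'' x) x =
     aniso_op y1' v' v'' x + aniso_op y1' w' w'' x"
  unfolding aniso_op_def by (simp add: distrib_left)

lemma has_derivative_y1_weight:
  assumes x: "x \<in> {0<..<1}" and "(v has_real_derivative v' x) (at x)"
  shows "((\<lambda>t. (1 - t^2)^2 / t * v t) has_real_derivative
           (1 - x^2)^2 / x * (v' x - (1 + 3*x^2) / (x * (1 - x^2)) * v x)) (at x)"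
proof -
  have "x \<noteq> 0" "1 - x^2 \<noteq> 0" using x one_minus_sq_pos[OF x] by auto
  then show ?thesis
    by (auto intro!: derivative_eq_intros assms(2) simp: field_simps power2_eq_square)
qed

lemma has_derivative_aniso_weight:
  assumes x: "x \<in> {0<..<1}" and "(y1 has_real_derivative y1' x) (at x)"
    and "(v' has_real_derivative v'' x) (at x)"
  shows "((\<lambda>t. (1 - t^2)^3 / t^2 * exp (y1 t / 2) * v' t) has_real_derivative
           (1 - x^2)^3 / x^2 * exp (y1 x / 2) * aniso_op y1' v' v'' x) (at x)"
proof -
  have "x \<noteq> 0" "1 - x^2 \<noteq> 0" using x one_minus_sq_pos[OF x] by auto
  then show ?thesis unfolding aniso_op_def
    by (auto intro!: derivative_eq_intros assms(2,3) simp: field_simps power2_eq_square power3_eq_cube)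
qed

locale einstein_ode =
  fixes y1 y2 y3 y1' y2' y3' y1'' y2'' y3'' s :: "real \<Rightarrow> real"
  assumes d1: "\<And>x. x \<in> {0..1} \<Longrightarrow> (y1 has_real_derivative y1' x) (at x within {0..1})"
    and d2: "\<And>x. x \<in> {0..1} \<Longrightarrow> (y2 has_real_derivative y2' x) (at x within {0..1})"
    and d3: "\<And>x. x \<in> {0..1} \<Longrightarrow> (y3 has_real_derivative y3' x) (at x within {0..1})"
    and dd1: "\<And>x. x \<in> {0..1} \<Longrightarrow> (y1' has_real_derivative y1'' x) (at x within {0..1})"
    and dd2: "\<And>x. x \<in> {0..1} \<Longrightarrow> (y2' has_real_derivative y2'' x) (at x within {0..1})"
    and dd3: "\<And>x. x \<in> {0..1} \<Longrightarrow> (y3' has_real_derivative y3'' x) (at x within {0..1})"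
    and s_pos: "\<And>x. x \<in> {0<..<1} \<Longrightarrow> s x > 0"
    and s_cont: "continuous_on {0<..<1} s"
    and ode1: "\<And>x. x \<in> {0<..<1} \<Longrightarrow>
      y1'' x - (1 + 3*x^2) / (x * (1 - x^2)) * y1' x + 1/6 * (y1' x)^2
        + 1/3 * ((y2' x)^2 + y2' x * y3' x + (y3' x)^2) = 0"
    and ode2: "\<And>x. x \<in> {0<..<1} \<Longrightarrow>
      aniso_op y1' y2' y2'' x + s x * (1 + exp (y2 x) - exp (y2 x + y3 x)) * (1 - exp (y2 x)) = 0"
    and ode3: "\<And>x. x \<in> {0<..<1} \<Longrightarrow>
      aniso_op y1' y3' y3'' x
        + s x * exp (y2 x) * (exp (y2 x) + exp (y2 x + y3 x) - 1) * (1 - exp (y3 x)) = 0"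
    and at_one: "y1 1 = 0" "y2 1 = 0" "y3 1 = 0" "y1' 1 = 0" "y2' 1 = 0" "y3' 1 = 0"

begin

lemma continuous_y: "continuous_on {0..1} y1" "continuous_on {0..1} y2" "continuous_on {0..1} y3"
  "continuous_on {0..1} y1'"
  by (rule DERIV_continuous_on, erule d1 d2 d3 dd1)+

lemma continuous_on_open_y: "continuous_on {0<..<1} y1" "continuous_on {0<..<1} y2"
  "continuous_on {0<..<1} y3" "continuous_on {0<..<1} y1'"
  using continuous_y by (auto elim: continuous_on_subset)

lemma d23: "x \<in> {0..1} \<Longrightarrow>
    ((\<lambda>x. y2 x + y3 x) has_real_derivative y2' x + y3' x) (at x within {0..1})"
  and dd23: "x \<in> {0..1} \<Longrightarrow>
    ((\<lambda>x. y2' x + y3' x) has_real_derivative y2'' x + y3'' x) (at x within {0..1})"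
  by (intro DERIV_add d2 d3 dd2 dd3; assumption)+

lemma interior_deriv:
  "x \<in> {0<..<1} \<Longrightarrow> (y1 has_real_derivative y1' x) (at x)"
  "x \<in> {0<..<1} \<Longrightarrow> (y2 has_real_derivative y2' x) (at x)"
  "x \<in> {0<..<1} \<Longrightarrow> (y3 has_real_derivative y3' x) (at x)"
  "x \<in> {0<..<1} \<Longrightarrow> ((\<lambda>x. y2 x + y3 x) has_real_derivative y2' x + y3' x) (at x)"
  using d1[of x] d2[of x] d3[of x] d23[of x] by (auto simp: at_within_Icc_at)

lemma ode23: "x \<in> {0<..<1} \<Longrightarrow>
  aniso_op y1' (\<lambda>x. y2' x + y3' x) (\<lambda>x. y2'' x + y3'' x) x
    + s x * (1 + exp (y2 x + y3 x) - exp (y2 x)) * (1 - exp (y2 x + y3 x)) = 0"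
  using ode2[of x] ode3[of x] unfolding aniso_op_add by (simp add: algebra_simps exp_add)

lemma continuous_on_y2_coeff:
    "continuous_on {0<..<1} (\<lambda>x. s x * (1 + exp (y2 x) - exp (y2 x + y3 x)))"
  and continuous_on_y3_coeff:
    "continuous_on {0<..<1} (\<lambda>x. s x * exp (y2 x) * (exp (y2 x) + exp (y2 x + y3 x) - 1))"
  and continuous_on_y23_coeff:
    "continuous_on {0<..<1} (\<lambda>x. s x * (1 + exp (y2 x + y3 x) - exp (y2 x)))"
  by (intro continuous_intros s_cont continuous_on_open_y)+

lemma aniso_op_nonpos_imp_deriv_nonneg:
  fixes v' v'' :: "real \<Rightarrow> real"
  assumes dv': "\<And>x. x \<in> {0..1} \<Longrightarrow> (v' has_real_derivative v'' x) (at x within {0..1})"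
    and "v' 1 = 0" and op_nonpos: "\<And>x. x \<in> {0<..<1} \<Longrightarrow> aniso_op y1' v' v'' x \<le> 0"
  shows "\<forall>x\<in>{0<..<1}. v' x \<ge> 0"
    and "\<forall>x\<in>{0<..<1}. v' x = 0 \<longrightarrow> (\<forall>t\<in>{x..<1}. v' t = 0)"
proof -
  define w where "w t = (1 - t^2)^3 / t^2 * exp (y1 t / 2)" for t :: real
  have w_pos: "w x > 0" if "x \<in> {0<..<1}" for x
    using one_minus_sq_pos[OF that] that by (simp add: w_def)
  have "continuous_on {0<..1} y1" "continuous_on {0<..1} v'"
    using continuous_y(1) DERIV_continuous_on[OF dv'] by (auto elim: continuous_on_subset)
  then have cont: "continuous_on {0<..1} (\<lambda>x. w x * v' x)" unfolding w_def
    by (intro continuous_intros) auto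
  have deriv: "((\<lambda>x. w x * v' x) has_real_derivative
      w x * aniso_op y1' v' v'' x) (at x)" if "x \<in> {0<..<1}" for x
    using has_derivative_aniso_weight[OF that, of y1 y1' v' v''] d1[of x] dv'[of x] that
    by (simp add: w_def at_within_Icc_at)
  have nonpos: "w x * aniso_op y1' v' v'' x \<le> 0" if "x \<in> {0<..<1}" for x
    using w_pos[OF that] op_nonpos[OF that] by (simp add: mult_nonneg_nonpos)
  show "\<forall>x\<in>{0<..<1}. v' x \<ge> 0"
    and "\<forall>x\<in>{0<..<1}. v' x = 0 \<longrightarrow> (\<forall>t\<in>{x..<1}. v' t = 0)"
    using weighted_deriv_nonpos_imp_nonneg[OF w_pos cont deriv nonpos \<open>v' 1 = 0\<close>] by auto
qed

lemma aniso_ode_vanishing_tail: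
  fixes u u' u'' \<beta> :: "real \<Rightarrow> real"
  assumes du: "\<And>x. x \<in> {0..1} \<Longrightarrow> (u has_real_derivative u' x) (at x within {0..1})"
    and du': "\<And>x. x \<in> {0..1} \<Longrightarrow> (u' has_real_derivative u'' x) (at x within {0..1})"
    and "continuous_on {0<..<1} \<beta>"
    and ode: "\<And>x. x \<in> {0<..<1} \<Longrightarrow> aniso_op y1' u' u'' x + \<beta> x * (1 - exp (u x)) = 0"
    and "u 1 = 0" "x0 \<in> {0<..<1}" "\<And>t. t \<in> {x0..<1} \<Longrightarrow> u' t = 0"
  shows "\<forall>t\<in>{0<..<1}. u' t = 0"
proof
  fix t :: real assume t: "t \<in> {0<..<1}"
  define \<alpha> where "\<alpha> x = 2 * (1 + 2*x^2) / (x * (1 - x^2)) - 1/2 * y1' x" for x :: real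
  have cont_\<alpha>: "continuous_on {0<..<1} \<alpha>"
    unfolding \<alpha>_def using continuous_on_open_y(4) one_minus_sq_pos
    by (intro continuous_intros) force+
  have cont_\<beta>: "continuous_on {0<..<1} (\<lambda>x. - \<beta> x)"
    using assms(3) by (rule continuous_on_minus)
  have "u'' x = \<alpha> x * u' x + (- \<beta> x) * (1 - exp (u x))" if "x \<in> {0<..<1}" for x
    using ode[OF that] unfolding aniso_op_def \<alpha>_def by (simp add: algebra_simps)
  from exp_ode_vanishing_tail[OF du du' cont_\<alpha> cont_\<beta> this assms(5-7) t]
  show "u' t = 0" .
qed

lemma aniso_op_sign_imp_deriv_sign:
  fixes u u' u'' \<beta> :: "real \<Rightarrow> real"
  assumes du: "\<And>x. x \<in> {0..1} \<Longrightarrow> (u has_real_derivative u' x) (at x within {0..1})"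
    and du': "\<And>x. x \<in> {0..1} \<Longrightarrow> (u' has_real_derivative u'' x) (at x within {0..1})"
    and "continuous_on {0<..<1} \<beta>"
    and ode: "\<And>x. x \<in> {0<..<1} \<Longrightarrow> aniso_op y1' u' u'' x + \<beta> x * (1 - exp (u x)) = 0"
    and "u 0 \<noteq> 0" "u 1 = 0" "u' 1 = 0"
    and "c \<noteq> 0" and sign: "\<And>x. x \<in> {0<..<1} \<Longrightarrow> c * aniso_op y1' u' u'' x \<le> 0"
  shows "\<forall>x\<in>{0<..<1}. c * u' x > 0"
proof -
  have "((\<lambda>x. c * u' x) has_real_derivative c * u'' x) (at x within {0..1})" if "x \<in> {0..1}" for x
    using DERIV_cmult[OF du'[OF that]] .
  then have nonneg: "\<forall>x\<in>{0<..<1}. c * u' x \<ge> 0"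
    and propagate: "\<forall>x\<in>{0<..<1}. c * u' x = 0 \<longrightarrow> (\<forall>t\<in>{x..<1}. c * u' t = 0)"
    using aniso_op_nonpos_imp_deriv_nonneg[of "\<lambda>x. c * u' x" "\<lambda>x. c * u'' x"]
      \<open>u' 1 = 0\<close> sign by (simp_all add: aniso_op_scale)
  have nonzero: "c * u' x0 \<noteq> 0" if x0: "x0 \<in> {0<..<1}" for x0
  proof
    assume "c * u' x0 = 0"
    then have "u' t = 0" if "t \<in> {x0..<1}" for t
      using propagate x0 that \<open>c \<noteq> 0\<close> by auto
    then have "\<forall>t\<in>{0<..<1}. u' t = 0"
      using aniso_ode_vanishing_tail[OF du du' assms(3) ode \<open>u 1 = 0\<close> x0] by blast
    then have "u 0 = u 1" using deriv_vanishing_imp_eq_endpoint[OF du, of 0] by auto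
    then show False using \<open>u 0 \<noteq> 0\<close> \<open>u 1 = 0\<close> by simp
  qed
  show ?thesis
  proof
    fix x :: real assume x: "x \<in> {0<..<1}"
    have "0 \<le> c * u' x" using nonneg x by blast
    moreover have "c * u' x \<noteq> 0" using nonzero x by blast
    ultimately show "c * u' x > 0" by linarith
  qed
qed

lemma aniso_op_nonpos_imp_deriv_pos:
  fixes u u' u'' \<beta> :: "real \<Rightarrow> real"
  assumes "\<And>x. x \<in> {0..1} \<Longrightarrow> (u has_real_derivative u' x) (at x within {0..1})"
    and "\<And>x. x \<in> {0..1} \<Longrightarrow> (u' has_real_derivative u'' x) (at x within {0..1})"
    and "continuous_on {0<..<1} \<beta>"
    and "\<And>x. x \<in> {0<..<1} \<Longrightarrow> aniso_op y1' u' u'' x + \<beta> x * (1 - exp (u x)) = 0"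
    and "u 0 \<noteq> 0" "u 1 = 0" "u' 1 = 0"
    and "\<And>x. x \<in> {0<..<1} \<Longrightarrow> aniso_op y1' u' u'' x \<le> 0"
  shows "\<forall>x\<in>{0<..<1}. u' x > 0"
  using aniso_op_sign_imp_deriv_sign[OF assms(1-7), of 1] assms(8) by simp

lemma aniso_op_at_interior_max:
  fixes u u' u'' :: "real \<Rightarrow> real"
  assumes du: "\<And>x. x \<in> {0..1} \<Longrightarrow> (u has_real_derivative u' x) (at x within {0..1})"
    and du': "\<And>x. x \<in> {0..1} \<Longrightarrow> (u' has_real_derivative u'' x) (at x within {0..1})"
    and "x \<in> {0..1}" "u x > u 0" "u x > u 1"
  obtains x1 where "x1 \<in> {0<..<1}" "aniso_op y1' u' u'' x1 \<le> 0" "\<And>t. t \<in> {0..1} \<Longrightarrow> u t \<le> u x1"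
proof -
  obtain x1 where "x1 \<in> {0<..<1}" "u' x1 = 0" "u'' x1 \<le> 0" "\<And>t. t \<in> {0..1} \<Longrightarrow> u t \<le> u x1"
    using interior_max_second_deriv[OF du du' assms(3-5)] by blast
  then show ?thesis by (intro that[of x1]) (simp_all add: aniso_op_def)
qed

lemma y1'_nonneg:
  shows "\<forall>x\<in>{0<..<1}. y1' x \<ge> 0"
    and "\<forall>x\<in>{0<..<1}. y1' x = 0 \<longrightarrow> (\<forall>t\<in>{x..<1}. y1' t = 0)"
proof -
  define w where "w t = (1 - t^2)^2 / t" for t :: real
  have w_pos: "w x > 0" if "x \<in> {0<..<1}" for x
    using one_minus_sq_pos[OF that] that by (simp add: w_def)
  have "continuous_on {0<..1} y1'"
    using continuous_y(4) by (rule continuous_on_subset) auto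
  then have cont: "continuous_on {0<..1} (\<lambda>x. w x * y1' x)"
    unfolding w_def by (intro continuous_intros) auto
  have deriv: "((\<lambda>x. w x * y1' x) has_real_derivative
      w x * (y1'' x - (1 + 3*x^2) / (x * (1 - x^2)) * y1' x)) (at x)" if "x \<in> {0<..<1}" for x
    using has_derivative_y1_weight[OF that, of y1' y1''] dd1[of x] that
    by (simp add: w_def at_within_Icc_at)
  have nonpos: "w x * (y1'' x - (1 + 3*x^2) / (x * (1 - x^2)) * y1' x) \<le> 0"
    if "x \<in> {0<..<1}" for x
  proof -
    have "y1'' x - (1 + 3*x^2) / (x * (1 - x^2)) * y1' x
        = - (1/6 * (y1' x)^2 + 1/3 * ((y2' x)^2 + y2' x * y3' x + (y3' x)^2))"
      using ode1[OF that] by linarith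
    also have "\<dots> \<le> 0"
      using quadratic_form_nonneg[of "y2' x" "y3' x"]
      by (intro neg_le_0_iff_le[THEN iffD2] add_nonneg_nonneg) auto
    finally show ?thesis using w_pos[OF that] by (simp add: mult_nonneg_nonpos)
  qed
  show "\<forall>x\<in>{0<..<1}. y1' x \<ge> 0"
    and "\<forall>x\<in>{0<..<1}. y1' x = 0 \<longrightarrow> (\<forall>t\<in>{x..<1}. y1' t = 0)"
    using weighted_deriv_nonpos_imp_nonneg[OF w_pos cont deriv nonpos at_one(4)] by auto
qed

text \<open>If \<open>y1'\<close> vanishes near \<open>x = 1\<close>, then so does the quadratic form in \<open>ode1\<close>, hence
  \<open>y2'\<close> and \<open>y3'\<close>, and unique continuation spreads this to the whole interval.\<close>
lemma y23'_vanishing_if_y1'_tail_vanishing: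
  assumes x0: "x0 \<in> {0<..<1}" and tail: "\<And>t. t \<in> {x0..<1} \<Longrightarrow> y1' t = 0"
  shows "\<forall>t\<in>{0<..<1}. y2' t = 0" and "\<forall>t\<in>{0<..<1}. y3' t = 0"
proof -
  have "y2' t = 0 \<and> y3' t = 0" if t: "t \<in> {x0<..<1}" for t
  proof -
    have "(y1' has_real_derivative y1'' t) (at t)" using dd1[of t] t x0 by (simp add: at_within_Icc_at)
    then have "y1'' t = 0"
    proof (rule DERIV_local_const)
      show "0 < min (t - x0) (1 - t)" using t by simp
      show "\<forall>y. \<bar>t - y\<bar> < min (t - x0) (1 - t) \<longrightarrow> y1' t = y1' y"
        using tail t by (auto simp: abs_if split: if_splits)
    qed
    then have "(y2' t)^2 + y2' t * y3' t + (y3' t)^2 = 0"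
      using ode1[of t] tail[of t] t x0 by simp
    then show ?thesis by (simp add: quadratic_form_eq_0_iff)
  qed
  moreover define x1 where "x1 = (x0 + 1) / 2"
  moreover have x1: "x1 \<in> {0<..<1}" "x0 < x1" using x0 by (auto simp: x1_def)
  ultimately have "y2' t = 0" "y3' t = 0" if "t \<in> {x1..<1}" for t
    using that by auto
  then show "\<forall>t\<in>{0<..<1}. y2' t = 0" "\<forall>t\<in>{0<..<1}. y3' t = 0"
    using aniso_ode_vanishing_tail[OF d2 dd2 continuous_on_y2_coeff ode2 at_one(2) x1(1)]
      aniso_ode_vanishing_tail[OF d3 dd3 continuous_on_y3_coeff ode3 at_one(3) x1(1)]
    by blast+
qed

theorem y1'_pos:
  assumes "y1 0 \<noteq> 0"
  shows "\<forall>x\<in>{0<..<1}. y1' x > 0"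
proof
  fix x0 :: real assume x0: "x0 \<in> {0<..<1}"
  have "y1' x0 \<noteq> 0"
  proof
    assume "y1' x0 = 0"
    then have tail: "y1' t = 0" if "t \<in> {x0..<1}" for t
      using y1'_nonneg(2) x0 that by blast
    define \<alpha> where "\<alpha> x = (1 + 3*x^2) / (x * (1 - x^2)) - 1/6 * y1' x" for x :: real
    have "continuous_on {0<..<1} \<alpha>"
      unfolding \<alpha>_def using continuous_on_open_y(4) one_minus_sq_pos
      by (intro continuous_intros) force+
    moreover have "y1'' x = \<alpha> x * y1' x + 0 * (1 - exp (y1 x))" if "x \<in> {0<..<1}" for x
      using ode1[OF that] y23'_vanishing_if_y1'_tail_vanishing[OF x0 tail] that
      by (simp add: \<alpha>_def power2_eq_square algebra_simps)
    ultimately have "\<forall>t\<in>{0<..<1}. y1' t = 0"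
      using exp_ode_vanishing_tail[OF d1 dd1 _ continuous_on_const _ at_one(1) x0 tail] by blast
    then have "y1 0 = y1 1" using deriv_vanishing_imp_eq_endpoint[OF d1, of 0] by auto
    then show False using assms at_one(1) by simp
  qed
  moreover have "y1' x0 \<ge> 0" using y1'_nonneg(1) x0 by blast
  ultimately show "y1' x0 > 0" by linarith
qed

lemma coupled_max_point:
  fixes u u' u'' v :: "real \<Rightarrow> real"
  assumes du: "\<And>x. x \<in> {0..1} \<Longrightarrow> (u has_real_derivative u' x) (at x within {0..1})"
    and du': "\<And>x. x \<in> {0..1} \<Longrightarrow> (u' has_real_derivative u'' x) (at x within {0..1})"
    and ode: "\<And>x. x \<in> {0<..<1} \<Longrightarrow>
      aniso_op y1' u' u'' x + s x * (1 + exp (u x) - exp (v x)) * (1 - exp (u x)) = 0"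
    and "u 0 < 0" "u 1 = 0" "x \<in> {0..1}" "u x > 0"
  obtains x1 where "x1 \<in> {0..1}" "\<And>t. t \<in> {0..1} \<Longrightarrow> u t \<le> u x1"
    "1 + exp (u x1) \<le> exp (v x1)"
proof -
  obtain x1 where x1: "x1 \<in> {0<..<1}" "aniso_op y1' u' u'' x1 \<le> 0"
    and max: "\<And>t. t \<in> {0..1} \<Longrightarrow> u t \<le> u x1"
    using aniso_op_at_interior_max[OF du du' assms(6)] assms(4,5,7) by auto
  have "1 - exp (u x1) < 0" using max[OF assms(6)] assms(7) by simp
  moreover have "0 \<le> s x1 * (1 + exp (u x1) - exp (v x1)) * (1 - exp (u x1))"
    using ode[OF x1(1)] x1(2) by linarith
  ultimately have "s x1 * (1 + exp (u x1) - exp (v x1)) \<le> 0"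
    by (simp add: zero_le_mult_iff)
  then have "1 + exp (u x1) \<le> exp (v x1)"
    using s_pos[OF x1(1)] by (simp add: mult_le_0_iff)
  then show ?thesis by (intro that[of x1]) (use x1(1) max in auto)
qed

text \<open>At a positive maximum of \<open>y2\<close> the equation forces \<open>y2 + y3 > y2\<close>, and at a positive
  maximum of \<open>y2 + y3\<close> it forces \<open>y2 > y2 + y3\<close>; comparing the two maxima is contradictory.\<close>
lemma max_principle:
  assumes "y2 0 < 0" "y2 0 + y3 0 < 0"
  shows "\<forall>x\<in>{0..1}. y2 x \<le> 0 \<and> y2 x + y3 x \<le> 0"
proof -
  have "y2 1 + y3 1 = 0" using at_one by simp
  note max2 = coupled_max_point[OF d2 dd2 ode2 assms(1) at_one(2)]
    and max23 = coupled_max_point[OF d23 dd23 ode23 assms(2) this]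
  have y2_nonpos: "y2 x \<le> 0" if x: "x \<in> {0..1}" for x
  proof (rule ccontr)
    assume "\<not> y2 x \<le> 0"
    then obtain x1 where x1: "x1 \<in> {0..1}" and max1: "\<And>t. t \<in> {0..1} \<Longrightarrow> y2 t \<le> y2 x1"
      and e1: "1 + exp (y2 x1) \<le> exp (y2 x1 + y3 x1)"
      using max2 x by (metis linorder_not_le)
    have "0 < y2 x1 + y3 x1" using one_plus_exp_le_exp_imp[OF e1] by blast
    then obtain x2 where "x2 \<in> {0..1}" and "y2 x1 + y3 x1 \<le> y2 x2 + y3 x2"
      and e2: "1 + exp (y2 x2 + y3 x2) \<le> exp (y2 x2)"
      using max23 x1 by metis
    then show False
      using max1[of x2] one_plus_exp_le_exp_imp[OF e1] one_plus_exp_le_exp_imp[OF e2] by linarith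
  qed
  moreover have "y2 x + y3 x \<le> 0" if x: "x \<in> {0..1}" for x
  proof (rule ccontr)
    assume "\<not> y2 x + y3 x \<le> 0"
    then obtain x2 where "x2 \<in> {0..1}" and e2: "1 + exp (y2 x2 + y3 x2) \<le> exp (y2 x2)"
      using max23 x by (metis linorder_not_le)
    then show False using y2_nonpos[of x2] one_plus_exp_le_exp_imp[OF e2] by linarith
  qed
  ultimately show ?thesis by blast
qed

lemma y3'_sign:
  assumes pos: "\<And>x. x \<in> {0..1} \<Longrightarrow> 1 < exp (y2 x) + exp (y2 x + y3 x)" and "y3 0 \<noteq> 0"
  shows "\<forall>x\<in>{0<..<1}. y3 0 * y3' x < 0"
proof -
  define c where "c = y3 0"
  define \<beta> where "\<beta> x = s x * exp (y2 x) * (exp (y2 x) + exp (y2 x + y3 x) - 1)" for x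
  have \<beta>_pos: "\<beta> x > 0" if "x \<in> {0<..<1}" for x
    using s_pos[OF that] pos[of x] that by (simp add: \<beta>_def)
  have sign: "c * aniso_op y1' y3' y3'' x = - \<beta> x * (c * (1 - exp (y3 x)))" if "x \<in> {0<..<1}" for x
    using ode3[OF that] unfolding \<beta>_def by algebra
  have same_sign: "0 \<le> c * y3 x" if x: "x \<in> {0..1}" for x
  proof (rule ccontr)
    assume "\<not> 0 \<le> c * y3 x"
    moreover have "- c * y3 0 \<le> 0" by (simp add: c_def)
    ultimately have "- c * y3 x > - c * y3 0" "- c * y3 x > - c * y3 1"
      using at_one(3) by auto
    note calculation = this
    have dw: "((\<lambda>x. - c * y3 x) has_real_derivative - c * y3' x) (at x within {0..1})"
      and dw': "((\<lambda>x. - c * y3' x) has_real_derivative - c * y3'' x) (at x within {0..1})"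
      if "x \<in> {0..1}" for x
      by (rule DERIV_cmult, rule d3 dd3, rule that)+
    obtain x1 where x1: "x1 \<in> {0<..<1}"
      and op: "aniso_op y1' (\<lambda>x. - c * y3' x) (\<lambda>x. - c * y3'' x) x1 \<le> 0"
      and max: "\<And>t. t \<in> {0..1} \<Longrightarrow> - c * y3 t \<le> - c * y3 x1"
      using aniso_op_at_interior_max[OF dw dw' x] calculation by blast
    have "c * (1 - exp (y3 x1)) \<le> 0"
      using op sign[OF x1] \<beta>_pos[OF x1] unfolding aniso_op_scale by (simp add: mult_le_0_iff)
    then have "0 \<le> c * y3 x1" by (simp add: mult_one_minus_exp_nonpos_iff)
    then show False using max[OF x] \<open>\<not> 0 \<le> c * y3 x\<close> by simp
  qed
  have "\<forall>x\<in>{0<..<1}. - c * y3' x > 0"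
  proof (rule aniso_op_sign_imp_deriv_sign[OF d3 dd3 continuous_on_y3_coeff ode3
        \<open>y3 0 \<noteq> 0\<close> at_one(3) at_one(6)])
    show "- c \<noteq> 0" using \<open>y3 0 \<noteq> 0\<close> by (simp add: c_def)
    fix x :: real assume x: "x \<in> {0<..<1}"
    then have "c * (1 - exp (y3 x)) \<le> 0"
      using same_sign[of x] by (simp add: mult_one_minus_exp_nonpos_iff)
    then show "- c * aniso_op y1' y3' y3'' x \<le> 0"
      using sign[OF x] \<beta>_pos[OF x] by (simp add: mult_le_0_iff)
  qed
  then show ?thesis by (simp add: c_def)
qed

theorem anisotropy_monotone:
  assumes "y2 0 < 0" "y2 0 + y3 0 < 0" "1 < exp (y2 0) + exp (y2 0 + y3 0)" "y3 0 \<noteq> 0"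
  shows "\<forall>x\<in>{0<..<1}. y2' x > 0" and "\<forall>x\<in>{0<..<1}. y2' x + y3' x > 0"
    and "\<forall>x\<in>{0<..<1}. y3 0 * y3' x < 0"
proof -
  have nonpos: "y2 x \<le> 0" "y2 x + y3 x \<le> 0" if "x \<in> {0..1}" for x
    using max_principle[OF assms(1,2)] that by auto
  have y2': "\<forall>x\<in>{0<..<1}. y2' x > 0"
  proof (rule aniso_op_nonpos_imp_deriv_pos[OF d2 dd2 continuous_on_y2_coeff ode2 _ at_one(2,5)])
    fix x :: real assume x: "x \<in> {0<..<1}"
    have "exp (y2 x) \<le> 1" "exp (y2 x + y3 x) \<le> 1" using nonpos[of x] x by auto
    then have "0 \<le> s x * (1 + exp (y2 x) - exp (y2 x + y3 x)) * (1 - exp (y2 x))"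
      using s_pos[OF x] exp_gt_zero[of "y2 x"] by (intro mult_nonneg_nonneg; linarith)
    then show "aniso_op y1' y2' y2'' x \<le> 0" using ode2[OF x] by linarith
  qed (use assms in auto)
  have y23': "\<forall>x\<in>{0<..<1}. y2' x + y3' x > 0"
  proof (rule aniso_op_nonpos_imp_deriv_pos[OF d23 dd23 continuous_on_y23_coeff ode23])
    fix x :: real assume x: "x \<in> {0<..<1}"
    have "exp (y2 x) \<le> 1" "exp (y2 x + y3 x) \<le> 1" using nonpos[of x] x by auto
    then have "0 \<le> s x * (1 + exp (y2 x + y3 x) - exp (y2 x)) * (1 - exp (y2 x + y3 x))"
      using s_pos[OF x] exp_gt_zero[of "y2 x + y3 x"] by (intro mult_nonneg_nonneg; linarith)
    then show "aniso_op y1' (\<lambda>x. y2' x + y3' x) (\<lambda>x. y2'' x + y3'' x) x \<le> 0"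
      using ode23[OF x] by linarith
  qed (use assms at_one in auto)
  have "y2' t \<ge> 0" "y2' t + y3' t \<ge> 0" if "t \<in> {0<..<1}" for t
    using y2' y23' that by (auto intro: less_imp_le)
  then have exp_mono: "exp (y2 0) \<le> exp (y2 x)" "exp (y2 0 + y3 0) \<le> exp (y2 x + y3 x)"
    if "x \<in> {0..1}" for x
    using deriv_nonneg_imp_ge_left_endpoint[OF d2 _ that]
      deriv_nonneg_imp_ge_left_endpoint[OF d23 _ that] by auto
  have "1 < exp (y2 x) + exp (y2 x + y3 x)" if "x \<in> {0..1}" for x
    using add_mono[OF exp_mono[OF that]] assms(3) by linarith
  then show "\<forall>x\<in>{0<..<1}. y3 0 * y3' x < 0" using y3'_sign assms(4) by blast
  show "\<forall>x\<in>{0<..<1}. y2' x > 0" "\<forall>x\<in>{0<..<1}. y2' x + y3' x > 0" by (fact y2' y23')+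
qed

end

lemma einstein_ode_of_F_equations:
  fixes y1 y2 y3 y1' y2' y3' y1'' y2'' y3'' :: "real \<Rightarrow> real"
  assumes d1: "\<And>x. x \<in> {0..1} \<Longrightarrow> (y1 has_real_derivative y1' x) (at x within {0..1})"
    and d2: "\<And>x. x \<in> {0..1} \<Longrightarrow> (y2 has_real_derivative y2' x) (at x within {0..1})"
    and d3: "\<And>x. x \<in> {0..1} \<Longrightarrow> (y3 has_real_derivative y3' x) (at x within {0..1})"
    and "\<And>x. x \<in> {0..1} \<Longrightarrow> (y1' has_real_derivative y1'' x) (at x within {0..1})"
    and "\<And>x. x \<in> {0..1} \<Longrightarrow> (y2' has_real_derivative y2'' x) (at x within {0..1})"
    and "\<And>x. x \<in> {0..1} \<Longrightarrow> (y3' has_real_derivative y3'' x) (at x within {0..1})"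
    and "\<And>x. x \<in> {0<..<1} \<Longrightarrow>
      y1'' x - (1 + 3*x^2) / (x * (1 - x^2)) * y1' x + 1/6 * (y1' x)^2
        + 1/3 * ((y2' x)^2 + y2' x * y3' x + (y3' x)^2) = 0"
    and eq3: "\<And>x. x \<in> {0<..<1} \<Longrightarrow>
      y2'' x - 2 * (1 + 2*x^2) / (x * (1 - x^2)) * y2' x + 1/2 * y1' x * y2' x
        + 32 / (1 - x^2)^2 * F2 (exp (y1 x)) (exp (y2 x)) (exp (y3 x)) = 0"
    and eq4: "\<And>x. x \<in> {0<..<1} \<Longrightarrow>
      y3'' x - 2 * (1 + 2*x^2) / (x * (1 - x^2)) * y3' x + 1/2 * y1' x * y3' x
        + 32 / (1 - x^2)^2 * F3 (exp (y1 x)) (exp (y2 x)) (exp (y3 x)) = 0"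
    and "y1 1 = 0" "y2 1 = 0" "y3 1 = 0" "y1' 1 = 0" "y2' 1 = 0" "y3' 1 = 0"
  shows "einstein_ode y1 y2 y3 y1' y2' y3' y1'' y2'' y3''
    (\<lambda>x. 32 / (1 - x^2)^2 * exp (- (y1 x + 4 * y2 x + 2 * y3 x) / 3))"
proof
  have "continuous_on {0..1} y1" "continuous_on {0..1} y2" "continuous_on {0..1} y3"
    by (rule DERIV_continuous_on, erule d1 d2 d3)+
  then have "continuous_on {0<..<1} y1" "continuous_on {0<..<1} y2" "continuous_on {0<..<1} y3"
    by (auto elim: continuous_on_subset)
  then show "continuous_on {0<..<1} (\<lambda>x. 32 / (1 - x^2)^2 * exp (- (y1 x + 4 * y2 x + 2 * y3 x) / 3))"
    using one_minus_sq_pos by (intro continuous_intros) force+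
next
  fix x :: real assume x: "x \<in> {0<..<1}"
  show "32 / (1 - x^2)^2 * exp (- (y1 x + 4 * y2 x + 2 * y3 x) / 3) > 0"
    using one_minus_sq_pos[OF x] by simp
  show "aniso_op y1' y2' y2'' x + 32 / (1 - x^2)^2 * exp (- (y1 x + 4 * y2 x + 2 * y3 x) / 3)
      * (1 + exp (y2 x) - exp (y2 x + y3 x)) * (1 - exp (y2 x)) = 0"
    using eq3[OF x] by (simp add: aniso_op_def F2_exp algebra_simps add_divide_distrib diff_divide_distrib)
  show "aniso_op y1' y3' y3'' x + 32 / (1 - x^2)^2 * exp (- (y1 x + 4 * y2 x + 2 * y3 x) / 3)
      * exp (y2 x) * (exp (y2 x) + exp (y2 x + y3 x) - 1) * (1 - exp (y3 x)) = 0"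
    using eq4[OF x]
    by (simp add: aniso_op_def F3_exp algebra_simps add_divide_distrib diff_divide_distrib exp_add)
qed (use assms in auto)

theorem lemma3p1:
  fixes I1 I2 I3 :: "real \<Rightarrow> real"
    and y1' y2' y3' y1'' y2'' y3'' :: "real \<Rightarrow> real"
    and lam1 lam2 lam3 :: real
  defines "K \<equiv> (\<lambda>x. I1 x * I2 x * I3 x)"
    and "\<phi>1 \<equiv> (\<lambda>x. I2 x / I1 x)"
    and "\<phi>2 \<equiv> (\<lambda>x. I3 x / I2 x)"
    and "y1 \<equiv> (\<lambda>x. ln (I1 x * I2 x * I3 x))"
    and "y2 \<equiv> (\<lambda>x. ln (I2 x / I1 x))"
    and "y3 \<equiv> (\<lambda>x. ln (I3 x / I2 x))"
  assumes lam_pos: "lam1 > 0" "lam2 > 0" "lam3 > 0"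
    and lam_distinct: "lam1 \<noteq> lam2" "lam2 \<noteq> lam3" "lam1 \<noteq> lam3"
    and smooth: "smooth_on {0..1} I1" "smooth_on {0..1} I2" "smooth_on {0..1} I3"
    and I_pos: "\<forall>x\<in>{0..1}. I1 x > 0 \<and> I2 x > 0 \<and> I3 x > 0"
    and I_one: "I1 1 = 1" "I2 1 = 1" "I3 1 = 1"
    and d1: "\<forall>x\<in>{0..1}. (y1 has_real_derivative y1' x) (at x within {0..1})"
    and d2: "\<forall>x\<in>{0..1}. (y2 has_real_derivative y2' x) (at x within {0..1})"
    and d3: "\<forall>x\<in>{0..1}. (y3 has_real_derivative y3' x) (at x within {0..1})"
    and dd1: "\<forall>x\<in>{0..1}. (y1' has_real_derivative y1'' x) (at x within {0..1})"
    and dd2: "\<forall>x\<in>{0..1}. (y2' has_real_derivative y2'' x) (at x within {0..1})"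
    and dd3: "\<forall>x\<in>{0..1}. (y3' has_real_derivative y3'' x) (at x within {0..1})"
    and K0: "K 0 < 1"
    and eq1: "\<forall>x\<in>{0<..<1}. y1'' x - (1 + 3*x^2) / (x * (1 - x^2)) * y1' x + (1/6) * (y1' x)^2
                + (1/3) * ((y2' x)^2 + y2' x * y3' x + (y3' x)^2) = 0"
    and eq2: "\<forall>x\<in>{0<..<1}. y1'' x - (5 + 7*x^2) / (x * (1 - x^2)) * y1' x + (1/2) * (y1' x)^2
                + 16 / (1 - x^2)^2 * (3 - Upsilon (K x) (\<phi>1 x) (\<phi>2 x)) = 0"
    and eq3: "\<forall>x\<in>{0<..<1}. y2'' x - 2 * (1 + 2*x^2) / (x * (1 - x^2)) * y2' x + (1/2) * y1' x * y2' x
                + 32 / (1 - x^2)^2 * F2 (K x) (\<phi>1 x) (\<phi>2 x) = 0"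
    and eq4: "\<forall>x\<in>{0<..<1}. y3'' x - 2 * (1 + 2*x^2) / (x * (1 - x^2)) * y3' x + (1/2) * y1' x * y3' x
                + 32 / (1 - x^2)^2 * F3 (K x) (\<phi>1 x) (\<phi>2 x) = 0"
    and bc_phi: "\<phi>1 0 = lam2 / lam1" "\<phi>2 0 = lam3 / lam2"
    and bc_d0: "y1' 0 = 0" "y2' 0 = 0" "y3' 0 = 0"
    and bc_d1: "y1' 1 = 0" "y2' 1 = 0" "y3' 1 = 0"
  shows "(\<forall>x\<in>{0<..<1}. y1' x > 0) \<and>
         (\<phi>1 0 < 1 \<and> \<phi>1 0 * \<phi>2 0 < 1 \<and> 1 < \<phi>1 0 + \<phi>1 0 * \<phi>2 0 \<longrightarrow>
            (\<forall>x\<in>{0<..<1}. y2' x \<noteq> 0 \<and> y3' x \<noteq> 0 \<and> y2' x + y3' x \<noteq> 0) \<and>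
            (strict_mono_on {0<..<1} K \<or> strict_antimono_on {0<..<1} K) \<and>
            (strict_mono_on {0<..<1} \<phi>1 \<or> strict_antimono_on {0<..<1} \<phi>1) \<and>
            (strict_mono_on {0<..<1} \<phi>2 \<or> strict_antimono_on {0<..<1} \<phi>2) \<and>
            (strict_mono_on {0<..<1} (\<lambda>x. \<phi>1 x * \<phi>2 x) \<or>
             strict_antimono_on {0<..<1} (\<lambda>x. \<phi>1 x * \<phi>2 x)))"
proof -
  have exp_y: "K x = exp (y1 x)" "\<phi>1 x = exp (y2 x)" "\<phi>2 x = exp (y3 x)"
    "\<phi>1 x * \<phi>2 x = exp (y2 x + y3 x)" if "x \<in> {0..1}" for x
    using I_pos that by (simp_all add: K_def \<phi>1_def \<phi>2_def y1_def y2_def y3_def exp_add)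
  interpret einstein_ode y1 y2 y3 y1' y2' y3' y1'' y2'' y3''
    "\<lambda>x. 32 / (1 - x^2)^2 * exp (- (y1 x + 4 * y2 x + 2 * y3 x) / 3)"
    by (rule einstein_ode_of_F_equations)
      (use d1 d2 d3 dd1 dd2 dd3 eq1 eq3 eq4 bc_d1 exp_y in \<open>auto simp: y1_def y2_def y3_def I_one\<close>)
  have "y1 0 < 0" using K0 exp_y(1)[of 0] by simp
  then have y1': "\<forall>x\<in>{0<..<1}. y1' x > 0" using y1'_pos by simp
  show ?thesis
  proof (intro conjI impI y1')
    show "strict_mono_on {0<..<1} K \<or> strict_antimono_on {0<..<1} K"
      using exp_strict_mono_on_if_deriv(1)[of 0 1 K y1 y1'] exp_y interior_deriv y1' by auto
    assume H: "\<phi>1 0 < 1 \<and> \<phi>1 0 * \<phi>2 0 < 1 \<and> 1 < \<phi>1 0 + \<phi>1 0 * \<phi>2 0"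
    have "y3 0 \<noteq> 0"
      using exp_y(3)[of 0] bc_phi(2) lam_pos lam_distinct(2) by auto
    then have mono: "\<forall>x\<in>{0<..<1}. y2' x > 0" "\<forall>x\<in>{0<..<1}. y2' x + y3' x > 0"
      "\<forall>x\<in>{0<..<1}. y3 0 * y3' x < 0"
      using anisotropy_monotone H exp_y[of 0] by auto
    show "\<forall>x\<in>{0<..<1}. y2' x \<noteq> 0 \<and> y3' x \<noteq> 0 \<and> y2' x + y3' x \<noteq> 0"
      using mono by force
    show "strict_mono_on {0<..<1} \<phi>1 \<or> strict_antimono_on {0<..<1} \<phi>1"
      using exp_strict_mono_on_if_deriv(1)[of 0 1 \<phi>1 y2 y2'] exp_y interior_deriv mono by auto
    have exp_y23: "\<phi>1 x * \<phi>2 x = exp (y2 x + y3 x)" if "x \<in> {0<..<1}" for x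
      using exp_y(4)[of x] that by simp
    show "strict_mono_on {0<..<1} (\<lambda>x. \<phi>1 x * \<phi>2 x) \<or>
        strict_antimono_on {0<..<1} (\<lambda>x. \<phi>1 x * \<phi>2 x)"
      using exp_strict_mono_on_if_deriv(1)[OF exp_y23 interior_deriv(4)] mono(2) by blast
    show "strict_mono_on {0<..<1} \<phi>2 \<or> strict_antimono_on {0<..<1} \<phi>2"
      using exp_strict_mono_on_if_deriv[of 0 1 \<phi>2 y3 y3'] exp_y interior_deriv mono
        \<open>y3 0 \<noteq> 0\<close> by (cases "y3 0 < 0") (auto simp: mult_less_0_iff)
  qed
qed

end
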